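(* Let $\hat T$ be a TCD map on a BTB graph $G$ into $\mathbb{CP}^{d+1}$, let $s$ be a resplit, and let $\pi_U$ be a central projection from a point $U\in\mathbb{CP}^{d+1}$ to $\mathbb{CP}^d$. Then the resplit commutes with central projection: whenever both sides are defined, $\mu_s(\pi_U\circ\hat T)=\pi_U\circ\mu_s(\hat T)$, where $\mu_s$ denotes the resplit of TCD maps. Equivalently, $\mu_s\circ\pi_U=\pi_U\circ\mu_s$ as rational maps from rank-$(d+1)$ TCD maps on $G$ to TCD maps into $\mathbb{CP}^d$ on the resplit graph.
   Context: A BTB graph is a planar bipartite graph (black $B$, white $W$) in a disk or cactus with all black vertices of degree $3$. A TCD map is $T:W\to\mathbb{CP}^d$ such that for each black vertex $b$ the images of its three white neighbours are pairwise distinct and lie on a line $L_b$. Resplit $\mu_s$: at an internal white vertex $w_0$ of degree $2$ with black neighbours $b$ (other neighbours $w_1,w_2$) and $b'$ (other neighbours $w_3,w_4$), labelled so that $w_1,w_4$ share a face with $b,w_0,b'$ and $w_2,w_3$ share the other. It replaces $w_0,b,b'$ by $\tilde w_0$ and black vertices adjacent to $\{\tilde w_0,w_1,w_4\}$ and $\{\tilde w_0,w_2,w_3\}$. With lifts satisfying $V(w_0)=\alpha_1V(w_1)+\alpha_2V(w_2)=\alpha_3V(w_3)+\alpha_4V(w_4)$, the new point is $[\alpha_1V(w_1)-\alpha_4V(w_4)]$; other points are unchanged. It is defined when $T(w_1)\ne T(w_4)$ and $T(w_2)\ne T(w_3)$. Central projection from a point $U$ onto a complementary hyperplane $V\cong\mathbb{CP}^d$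 sends $P\ne U$ to $V\cap UP$. $\pi_U\circ\hat T$ is a TCD map iff $U$ is not any $\hat T(w)$ and lies on no line $L_b$. *)

theory Defs
  imports "HOL-Analysis.Analysis"
begin

text \<open>The ambient space
  CP^(d+1) is the set of one-dimensional complex subspaces of complex^'n,
  where CARD('n) = d+2.  All spans/dimensions are complex ones (vec.span,
  vec.dim come from the vector space structure given by scalar multiplication *s).\<close>

type_synonym 'n cvec = "complex ^ 'n"

definition cp_point :: "('n::finite) cvec set \<Rightarrow> bool" where
  "cp_point P \<longleftrightarrow> (\<exists>v. v \<noteq> 0 \<and> P = vec.span {v})"

definition cp_point_in :: "('n::finite) cvec set \<Rightarrow> ('n::finite) cvec set \<Rightarrow> bool" where
  "cp_point_in X P \<longleftrightarrow> cp_point P \<and> P \<subseteq> X"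

definition cp_line :: "('n::finite) cvec set \<Rightarrow> bool" where
  "cp_line L \<longleftrightarrow> vec.subspace L \<and> vec.dim L = 2"

definition nbrs :: "('b \<times> 'w) set \<Rightarrow> 'b \<Rightarrow> 'w set" where
  "nbrs E b = {w. (b, w) \<in> E}"

definition bnbrs :: "('b \<times> 'w) set \<Rightarrow> 'w \<Rightarrow> 'b set" where
  "bnbrs E w = {b. (b, w) \<in> E}"

text \<open>BTB graph (combinatorial part): finite bipartite graph, every black vertex of
  degree 3; Wbd is the set of boundary white vertices.\<close>
definition btb_graph :: "'b set \<Rightarrow> 'w set \<Rightarrow> 'w set \<Rightarrow> ('b \<times> 'w) set \<Rightarrow> bool" where
  "btb_graph B W Wbd E \<longleftrightarrow> finite B \<and> finite W \<and> Wbd \<subseteq> W \<and> E \<subseteq> B \<times> W \<and>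
     (\<forall>b\<in>B. card (nbrs E b) = 3)"

definition tcd_map_in :: "('n::finite) cvec set \<Rightarrow> 'b set \<Rightarrow> 'w set \<Rightarrow> ('b \<times> 'w) set
    \<Rightarrow> ('w \<Rightarrow> ('n::finite) cvec set) \<Rightarrow> bool" where
  "tcd_map_in X B W E T \<longleftrightarrow>
     (\<forall>w\<in>W. cp_point_in X (T w)) \<and>
     (\<forall>b\<in>B. (\<forall>w\<in>nbrs E b. \<forall>w'\<in>nbrs E b. w \<noteq> w' \<longrightarrow> T w \<noteq> T w') \<and>
             (\<exists>L. cp_line L \<and> L \<subseteq> X \<and> (\<forall>w\<in>nbrs E b. T w \<subseteq> L)))"

abbreviation tcd_map :: "'b set \<Rightarrow> 'w set \<Rightarrow> ('b \<times> 'w) set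
    \<Rightarrow> ('w \<Rightarrow> ('n::finite) cvec set) \<Rightarrow> bool" where
  "tcd_map \<equiv> tcd_map_in UNIV"

text \<open>Resplit data: w0 internal white of degree 2 with black neighbours b, b';
  b has other neighbours w1, w2, and b' has other neighbours w3, w4, labelled so that
  w1, w4 share a face with b, w0, b' (and w2, w3 the other one).\<close>
definition is_resplit :: "'b set \<Rightarrow> 'w set \<Rightarrow> 'w set \<Rightarrow> ('b \<times> 'w) set
    \<Rightarrow> 'w \<Rightarrow> 'b \<Rightarrow> 'b \<Rightarrow> 'w \<Rightarrow> 'w \<Rightarrow> 'w \<Rightarrow> 'w \<Rightarrow> bool" where
  "is_resplit B W Wbd E w0 b b' w1 w2 w3 w4 \<longleftrightarrow>
     w0 \<in> W \<and> w0 \<notin> Wbd \<and> b \<in> B \<and> b' \<in> B \<and> b \<noteq> b' \<and>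
     bnbrs E w0 = {b, b'} \<and>
     nbrs E b = {w0, w1, w2} \<and> nbrs E b' = {w0, w3, w4}"

text \<open>The resplit graph: the new white vertex keeps the name w0 and the new black
  vertices reuse the names b (adjacent to w0,w1,w4) and b' (adjacent to w0,w2,w3).\<close>
definition resplit_edges :: "('b \<times> 'w) set \<Rightarrow> 'w \<Rightarrow> 'b \<Rightarrow> 'b \<Rightarrow> 'w \<Rightarrow> 'w \<Rightarrow> 'w \<Rightarrow> 'w
    \<Rightarrow> ('b \<times> 'w) set" where
  "resplit_edges E w0 b b' w1 w2 w3 w4 =
     {e \<in> E. fst e \<noteq> b \<and> fst e \<noteq> b'} \<union>
     {(b, w0), (b, w1), (b, w4), (b', w0), (b', w2), (b', w3)}"

definition resplit_defined :: "('w \<Rightarrow> ('n::finite) cvec set) \<Rightarrow> 'w \<Rightarrow> 'w \<Rightarrow> 'w \<Rightarrow> 'w \<Rightarrow> bool" where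
  "resplit_defined T w1 w2 w3 w4 \<longleftrightarrow> T w1 \<noteq> T w4 \<and> T w2 \<noteq> T w3"

definition resplit_point :: "('w \<Rightarrow> ('n::finite) cvec set) \<Rightarrow> 'w \<Rightarrow> 'w \<Rightarrow> 'w \<Rightarrow> 'w \<Rightarrow> 'w
    \<Rightarrow> ('n::finite) cvec set" where
  "resplit_point T w0 w1 w2 w3 w4 = (SOME P. \<exists>v0 v1 v2 v3 v4 a1 a2 a3 a4.
      v0 \<noteq> 0 \<and> v1 \<noteq> 0 \<and> v2 \<noteq> 0 \<and> v3 \<noteq> 0 \<and> v4 \<noteq> 0 \<and>
      T w0 = vec.span {v0} \<and> T w1 = vec.span {v1} \<and> T w2 = vec.span {v2} \<and>
      T w3 = vec.span {v3} \<and> T w4 = vec.span {v4} \<and>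
      v0 = a1 *s v1 + a2 *s v2 \<and> v0 = a3 *s v3 + a4 *s v4 \<and>
      P = vec.span {a1 *s v1 - a4 *s v4})"

definition resplit_map :: "('w \<Rightarrow> ('n::finite) cvec set) \<Rightarrow> 'w \<Rightarrow> 'w \<Rightarrow> 'w \<Rightarrow> 'w \<Rightarrow> 'w
    \<Rightarrow> ('w \<Rightarrow> ('n::finite) cvec set)" where
  "resplit_map T w0 w1 w2 w3 w4 = T(w0 := resplit_point T w0 w1 w2 w3 w4)"

text \<open>Central projection from the point U onto the complementary hyperplane P(V):
  P \<mapsto> V \<inter> UP, where UP is the projective line through U and P.\<close>
definition complementary_hyperplane :: "('n::finite) cvec set \<Rightarrow> ('n::finite) cvec set \<Rightarrow> bool" where
  "complementary_hyperplane U V \<longleftrightarrow>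
     vec.subspace V \<and> vec.dim V = CARD('n) - 1 \<and> U \<inter> V = {0}"

definition cproj :: "('n::finite) cvec set \<Rightarrow> ('n::finite) cvec set \<Rightarrow> ('n::finite) cvec set \<Rightarrow> ('n::finite) cvec set" where
  "cproj U V P = V \<inter> vec.span (U \<union> P)"

end

theory Submission
  imports Defs
begin

text \<open>Write U = [u]. Since V is a complementary hyperplane, every vector splits uniquely as
  c u + y with y in V, and the projection p along u onto V is linear with \<pi>_U [x] = [p x].
  Hence p maps lifts x_i of T(w_i) to lifts of \<pi>_U(T(w_i)) and preserves the relations
  x_0 = \<alpha>1 x_1 + \<alpha>2 x_2 = \<alpha>3 x_3 + \<alpha>4 x_4 with the same coefficients. The resplit point
  [\<alpha>1 x_1 - \<alpha>4 x_4] does not depend on the chosen lifts, so the resplit point of \<pi>_U \<circ> T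
  is [p(\<alpha>1 x_1 - \<alpha>4 x_4)], the projection of the resplit point of T.\<close>

context vector_space
begin

lemma span_singleton_scale: "c \<noteq> 0 \<Longrightarrow> span {scale c x} = span {x}"
  using span_image_scale[of "{x}" "\<lambda>_. c"] by simp

lemma subspace_scale_iff: "subspace S \<Longrightarrow> c \<noteq> 0 \<Longrightarrow> scale c x \<in> S \<longleftrightarrow> x \<in> S"
  using subspace_scale[of S "scale c x" "inverse c"] subspace_scale[of S x c] by auto

lemma span_singleton_eq_imp_scale:
  assumes "x \<noteq> 0" and "span {x} = span {y}"
  shows "\<exists>c. c \<noteq> 0 \<and> x = scale c y"
proof -
  have "x \<in> span {y}"
    using assms(2) span_base[of x "{x}"] by simp
  then obtain c where "x = scale c y"
    by (auto simp: span_singleton)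
  with assms(1) show ?thesis
    by auto
qed

lemma lincomb_two_unique:
  assumes "x \<noteq> 0" and "y \<noteq> 0" and "span {x} \<noteq> span {y}"
    and "scale a x + scale b y = scale a' x + scale b' y"
  shows "a = a' \<and> b = b'"
proof -
  have diff: "scale (a - a') x = scale (b' - b) y"
    using assms(4) by (simp add: algebra_simps)
  have "a = a'"
  proof (rule ccontr)
    assume "a \<noteq> a'"
    then have "x = scale ((b' - b) / (a - a')) y"
      using arg_cong[OF diff, of "scale (inverse (a - a'))"] by (simp add: divide_inverse_commute)
    moreover from this have "(b' - b) / (a - a') \<noteq> 0"
      using assms(1) by auto
    ultimately show False
      using assms(3) span_singleton_scale by metis
  qed
  with diff assms(2) show ?thesis
    by simp
qed

end

context finite_dimensional_vector_space
begin

lemma lincomb_in_dim_two: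
  assumes "dim L \<le> 2" and "x \<in> L" and "y \<in> L" and "z \<in> L"
    and "x \<noteq> 0" and "y \<noteq> 0" and "span {x} \<noteq> span {y}"
  shows "\<exists>a b. z = scale a x + scale b y"
proof -
  have "x \<notin> span {y}"
    using assms(5,7) span_singleton_scale by (auto simp: span_singleton)
  then have "x \<noteq> y" and "independent {x, y}"
    using assms(6) span_base[of y "{y}"] by (auto simp: independent_insert)
  then have "L \<subseteq> span {x, y}"
    using assms(1-3) by (intro card_ge_dim_independent) auto
  with assms(4) have "z \<in> span {x, y}"
    by blast
  then obtain a b where "z - scale a x = scale b y"
    by (auto simp: span_breakdown_eq span_singleton)
  then show ?thesis
    by (metis diff_eq_eq add.commute)
qed

lemma hyperplane_decomp:
  assumes "subspace V" and "dim V = dim (UNIV :: 'b set) - 1" and "u \<notin> V"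
  shows "\<exists>c. z - scale c u \<in> V"
proof -
  have span_V: "span V = V"
    using assms(1) by simp
  have "dim (insert u V) = dim V + 1"
    using assms(3) by (simp add: dim_insert span_V)
  moreover have "dim (insert u V) \<le> dim (UNIV :: 'b set)"
    by (rule dim_subset) simp
  ultimately have "dim (insert u V) = dimension"
    using assms(2) by (simp add: dimension_def)
  then have "z \<in> span (insert u V)"
    by (simp add: dim_eq_full)
  then show ?thesis
    by (simp add: span_breakdown_eq span_V)
qed

end

definition is_lift :: "('n::finite) cvec \<Rightarrow> 'n cvec set \<Rightarrow> bool" where
  "is_lift v P \<longleftrightarrow> v \<noteq> 0 \<and> P = vec.span {v}"

lemma cp_point_iff_lift: "cp_point P \<longleftrightarrow> (\<exists>v. is_lift v P)"
  by (auto simp: cp_point_def is_lift_def)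

lemma is_lift_unique: "is_lift v P \<Longrightarrow> is_lift v' P \<Longrightarrow> \<exists>k. k \<noteq> 0 \<and> v' = k *s v"
  unfolding is_lift_def using vec.span_singleton_eq_imp_scale by metis

lemma complementary_hyperplane_decomp:
  fixes u :: "('n::finite) cvec"
  assumes "u \<noteq> 0" and "complementary_hyperplane (vec.span {u}) V"
  shows "u \<notin> V" and "\<exists>c. z - c *s u \<in> V"
proof -
  have V: "vec.subspace V" "vec.dim V = vec.dim (UNIV :: 'n cvec set) - 1" "vec.span {u} \<inter> V = {0}"
    using assms(2) unfolding complementary_hyperplane_def vec_dim_card by auto
  show u: "u \<notin> V"
    using assms(1) V(3) vec.span_base[of u "{u}"] by auto
  show "\<exists>c. z - c *s u \<in> V"
    by (rule vec.hyperplane_decomp[OF V(1,2) u])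
qed

definition proj_along :: "('n::finite) cvec \<Rightarrow> 'n cvec set \<Rightarrow> 'n cvec \<Rightarrow> 'n cvec" where
  "proj_along u V z = z - (SOME c. z - c *s u \<in> V) *s u"

context
  fixes u :: "('n::finite) cvec" and V :: "'n cvec set"
  assumes u_nonzero: "u \<noteq> 0" and hyperplane: "complementary_hyperplane (vec.span {u}) V"
begin

lemma proj_along_eq:
  assumes "z - c *s u \<in> V"
  shows "proj_along u V z = z - c *s u"
proof -
  have V: "vec.subspace V"
    using hyperplane by (simp add: complementary_hyperplane_def)
  define a where "a = (SOME a. z - a *s u \<in> V)"
  have a: "z - a *s u \<in> V"
    unfolding a_def using complementary_hyperplane_decomp(2)[OF u_nonzero hyperplane]
    by (rule someI_ex)
  have "(c - a) *s u \<in> V"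
    using vec.subspace_diff[OF V a assms] by (simp add: algebra_simps)
  then have "a = c"
    using complementary_hyperplane_decomp(1)[OF u_nonzero hyperplane] vec.subspace_scale_iff[OF V]
    by (metis eq_iff_diff_eq_0)
  then show ?thesis
    unfolding proj_along_def a_def[symmetric] by simp
qed

lemma linear_proj_along: "Vector_Spaces.linear (*s) (*s) (proj_along u V)"
proof -
  have V: "vec.subspace V"
    using hyperplane by (simp add: complementary_hyperplane_def)
  have "proj_along u V (x + y) = proj_along u V x + proj_along u V y" for x y
  proof -
    obtain a b where a: "x - a *s u \<in> V" and b: "y - b *s u \<in> V"
      using complementary_hyperplane_decomp(2)[OF u_nonzero hyperplane] by metis
    have sum: "(x + y) - (a + b) *s u = (x - a *s u) + (y - b *s u)"
      by (simp add: algebra_simps vector_sadd_rdistrib)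
    have "(x + y) - (a + b) *s u \<in> V"
      unfolding sum by (rule vec.subspace_add[OF V a b])
    then show ?thesis
      unfolding proj_along_eq[OF a] proj_along_eq[OF b] sum[symmetric] by (rule proj_along_eq)
  qed
  moreover have "proj_along u V (k *s x) = k *s proj_along u V x" for k x
  proof -
    obtain a where "x - a *s u \<in> V"
      using complementary_hyperplane_decomp(2)[OF u_nonzero hyperplane] by metis
    moreover from this have "k *s x - (k * a) *s u \<in> V"
      using vec.subspace_scale[OF V, of "x - a *s u" k] by (simp add: algebra_simps)
    ultimately show ?thesis
      by (simp add: proj_along_eq vec.scale_right_diff_distrib)
  qed
  ultimately show ?thesis
    by (simp add: Vector_Spaces.linear_iff vec.vector_space_axioms)
qed

lemma cproj_span_singleton:
  "cproj (vec.span {u}) V (vec.span {x}) = vec.span {proj_along u V x}"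
proof -
  have V: "vec.subspace V" and u: "u \<notin> V"
    using hyperplane complementary_hyperplane_decomp(1)[OF u_nonzero hyperplane]
    by (simp_all add: complementary_hyperplane_def)
  obtain c where c: "x - c *s u \<in> V"
    using complementary_hyperplane_decomp(2)[OF u_nonzero hyperplane] by metis
  have plane: "y \<in> vec.span (vec.span {u} \<union> vec.span {x}) \<longleftrightarrow> (\<exists>a b. y = a *s u + b *s x)" for y
    unfolding vec.span_Un vec.span_span by (auto simp: vec.span_singleton)
  show ?thesis
    unfolding cproj_def proj_along_eq[OF c]
  proof (intro set_eqI iffI)
    fix y
    assume "y \<in> V \<inter> vec.span (vec.span {u} \<union> vec.span {x})"
    then obtain a b where y: "y \<in> V" "y = a *s u + b *s x"
      using plane by blast
    have residue: "(a + b * c) *s u = y - b *s (x - c *s u)"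
      using y(2) by (simp add: algebra_simps vector_sadd_rdistrib)
    moreover have "y - b *s (x - c *s u) \<in> V"
      using vec.subspace_diff[OF V y(1) vec.subspace_scale[OF V c]] .
    ultimately have "a + b * c = 0"
      using u vec.subspace_scale_iff[OF V] by metis
    then have "y = b *s (x - c *s u)"
      using residue by simp
    then show "y \<in> vec.span {x - c *s u}"
      by (simp add: vec.span_singleton)
  next
    fix y
    assume "y \<in> vec.span {x - c *s u}"
    then obtain k where k: "y = k *s (x - c *s u)"
      by (auto simp: vec.span_singleton)
    have "y = (- k * c) *s u + k *s x"
      unfolding k by (simp add: algebra_simps)
    then have "y \<in> vec.span (vec.span {u} \<union> vec.span {x})"
      using plane by blast
    moreover have "y \<in> V"
      unfolding k by (rule vec.subspace_scale[OF V c])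
    ultimately show "y \<in> V \<inter> vec.span (vec.span {u} \<union> vec.span {x})"
      by blast
  qed
qed

lemma is_lift_cproj:
  assumes "is_lift x P" and "cp_point (cproj (vec.span {u}) V P)"
  shows "is_lift (proj_along u V x) (cproj (vec.span {u}) V P)"
proof -
  have image: "cproj (vec.span {u}) V P = vec.span {proj_along u V x}"
    using assms(1) cproj_span_singleton by (simp add: is_lift_def)
  obtain y where "is_lift y (vec.span {proj_along u V x})"
    using assms(2) unfolding image cp_point_iff_lift ..
  then have "y \<noteq> 0" and "y \<in> vec.span {proj_along u V x}"
    unfolding is_lift_def by (simp, metis singletonI vec.span_base)
  then have "proj_along u V x \<noteq> 0"
    by auto
  then show ?thesis
    by (simp add: is_lift_def image)
qed

end

lemma resplit_lifts_unique:
  assumes v: "is_lift v0 (T w0)" "is_lift v1 (T w1)" "is_lift v2 (T w2)" "is_lift v3 (T w3)"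
      "is_lift v4 (T w4)" "v0 = a1 *s v1 + a2 *s v2" "v0 = a3 *s v3 + a4 *s v4"
    and z: "is_lift z0 (T w0)" "is_lift z1 (T w1)" "is_lift z2 (T w2)" "is_lift z3 (T w3)"
      "is_lift z4 (T w4)" "z0 = e1 *s z1 + e2 *s z2" "z0 = e3 *s z3 + e4 *s z4"
    and "T w1 \<noteq> T w2" and "T w3 \<noteq> T w4"
  shows "vec.span {e1 *s z1 - e4 *s z4} = vec.span {a1 *s v1 - a4 *s v4}"
proof -
  obtain k0 where k0: "k0 \<noteq> 0" "z0 = k0 *s v0"
    using is_lift_unique[OF v(1) z(1)] by blast
  obtain k1 k2 k3 k4 where k: "z1 = k1 *s v1" "z2 = k2 *s v2" "z3 = k3 *s v3" "z4 = k4 *s v4"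
    using is_lift_unique[OF v(2) z(2)] is_lift_unique[OF v(3) z(3)]
      is_lift_unique[OF v(4) z(4)] is_lift_unique[OF v(5) z(5)] by blast
  have lines: "v1 \<noteq> 0" "v2 \<noteq> 0" "vec.span {v1} \<noteq> vec.span {v2}"
      "v3 \<noteq> 0" "v4 \<noteq> 0" "vec.span {v3} \<noteq> vec.span {v4}"
    using v(2-5) assms(15,16) by (auto simp: is_lift_def)
  have "(e1 * k1) *s v1 + (e2 * k2) *s v2 = (k0 * a1) *s v1 + (k0 * a2) *s v2"
    using z(6) v(6) k0(2) k(1,2) by (simp add: algebra_simps)
  then have a1: "e1 * k1 = k0 * a1"
    using vec.lincomb_two_unique[OF lines(1-3)] by blast
  have "(e3 * k3) *s v3 + (e4 * k4) *s v4 = (k0 * a3) *s v3 + (k0 * a4) *s v4"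
    using z(7) v(7) k0(2) k(3,4) by (simp add: algebra_simps)
  then have a4: "e4 * k4 = k0 * a4"
    using vec.lincomb_two_unique[OF lines(4-6)] by blast
  have "e1 *s z1 - e4 *s z4 = k0 *s (a1 *s v1 - a4 *s v4)"
    using a1 a4 k(1,4) by (simp add: algebra_simps)
  then show ?thesis
    using vec.span_singleton_scale[OF k0(1)] by metis
qed

lemma resplit_point_eq:
  assumes v: "is_lift v0 (T w0)" "is_lift v1 (T w1)" "is_lift v2 (T w2)" "is_lift v3 (T w3)"
      "is_lift v4 (T w4)" "v0 = a1 *s v1 + a2 *s v2" "v0 = a3 *s v3 + a4 *s v4"
    and "T w1 \<noteq> T w2" and "T w3 \<noteq> T w4"
  shows "resplit_point T w0 w1 w2 w3 w4 = vec.span {a1 *s v1 - a4 *s v4}"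
  unfolding resplit_point_def
proof (rule some_equality, goal_cases)
  case 1
  show ?case
    apply (rule exI[of _ v0], rule exI[of _ v1], rule exI[of _ v2], rule exI[of _ v3], rule exI[of _ v4])
    apply (rule exI[of _ a1], rule exI[of _ a2], rule exI[of _ a3], rule exI[of _ a4])
    using v by (simp add: is_lift_def)
next
  case (2 P)
  then obtain z0 z1 z2 z3 z4 e1 e2 e3 e4 where
    z: "is_lift z0 (T w0)" "is_lift z1 (T w1)" "is_lift z2 (T w2)" "is_lift z3 (T w3)"
      "is_lift z4 (T w4)" "z0 = e1 *s z1 + e2 *s z2" "z0 = e3 *s z3 + e4 *s z4"
    and P: "P = vec.span {e1 *s z1 - e4 *s z4}"
    unfolding is_lift_def by blast
  show ?case
    unfolding P by (rule resplit_lifts_unique[where T = T, OF v z assms(8,9)])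
qed

lemma resplit_point_linear_image:
  assumes lin: "Vector_Spaces.linear (*s) (*s) f"
    and v: "\<And>w. w \<in> {w0, w1, w2, w3, w4} \<Longrightarrow> is_lift (v w) (T w)"
    and fv: "\<And>w. w \<in> {w0, w1, w2, w3, w4} \<Longrightarrow> is_lift (f (v w)) (T' w)"
    and a12: "v w0 = a1 *s v w1 + a2 *s v w2" and a34: "v w0 = a3 *s v w3 + a4 *s v w4"
    and "T w1 \<noteq> T w2" "T w3 \<noteq> T w4" "T' w1 \<noteq> T' w2" "T' w3 \<noteq> T' w4"
  shows "\<exists>x. resplit_point T w0 w1 w2 w3 w4 = vec.span {x}
    \<and> resplit_point T' w0 w1 w2 w3 w4 = vec.span {f x}"
proof -
  have "f (v w0) = a1 *s f (v w1) + a2 *s f (v w2)"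
    unfolding a12 by (simp add: vec.linear_add[OF lin] vec.linear_scale[OF lin])
  moreover have "f (v w0) = a3 *s f (v w3) + a4 *s f (v w4)"
    unfolding a34 by (simp add: vec.linear_add[OF lin] vec.linear_scale[OF lin])
  ultimately have "resplit_point T' w0 w1 w2 w3 w4 = vec.span {f (a1 *s v w1 - a4 *s v w4)}"
    using resplit_point_eq[where T = T', OF fv fv fv fv fv] assms(8-)
    by (simp add: vec.linear_diff[OF lin] vec.linear_scale[OF lin])
  moreover have "resplit_point T w0 w1 w2 w3 w4 = vec.span {a1 *s v w1 - a4 *s v w4}"
    using resplit_point_eq[where T = T, OF v v v v v a12 a34] assms(6,7) by simp
  ultimately show ?thesis
    by blast
qed

lemma tcd_map_in_distinct:
  "tcd_map_in X B W E T \<Longrightarrow> b \<in> B \<Longrightarrow> w \<in> nbrs E b \<Longrightarrow> w' \<in> nbrs E b \<Longrightarrow> w \<noteq> w'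
    \<Longrightarrow> T w \<noteq> T w'"
  unfolding tcd_map_in_def by blast

lemma tcd_map_in_lifts:
  assumes "tcd_map_in X B W E T"
  shows "\<exists>v. \<forall>w\<in>W. is_lift (v w) (T w)"
proof -
  have "\<forall>w\<in>W. \<exists>v. is_lift v (T w)"
    using assms by (auto simp: tcd_map_in_def cp_point_in_def cp_point_iff_lift)
  then show ?thesis
    by (rule bchoice)
qed

lemma tcd_map_in_lincomb:
  assumes tcd: "tcd_map_in X B W E T" and b: "b \<in> B" "nbrs E b = {w0, w1, w2}" "w1 \<noteq> w2"
    and v: "is_lift v0 (T w0)" "is_lift v1 (T w1)" "is_lift v2 (T w2)"
  shows "\<exists>a1 a2. v0 = a1 *s v1 + a2 *s v2"
proof -
  have "\<exists>L. cp_line L \<and> L \<subseteq> X \<and> (\<forall>w\<in>nbrs E b. T w \<subseteq> L)"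
    using tcd b(1) unfolding tcd_map_in_def by blast
  then obtain L where L: "cp_line L" "T w0 \<subseteq> L" "T w1 \<subseteq> L" "T w2 \<subseteq> L"
    unfolding b(2) by blast
  have in_L: "x \<in> L" if "is_lift x P" and "P \<subseteq> L" for x P
    using that vec.span_base[of x "{x}"] by (auto simp: is_lift_def)
  have "T w1 \<noteq> T w2"
    using tcd_map_in_distinct[OF tcd b(1)] b(2,3) by simp
  then have "vec.span {v1} \<noteq> vec.span {v2}"
    using v(2,3) by (simp add: is_lift_def)
  moreover have "vec.dim L \<le> 2" and "v1 \<noteq> 0" and "v2 \<noteq> 0"
    using L(1) v(2,3) by (simp_all add: cp_line_def is_lift_def)
  ultimately show ?thesis
    using vec.lincomb_in_dim_two in_L[OF v(2) L(3)] in_L[OF v(3) L(4)] in_L[OF v(1) L(2)]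
    by blast
qed

lemma card_three_neq: "card {x, y, z} = 3 \<Longrightarrow> y \<noteq> z"
  by (cases "y = z") (auto simp: card_insert_if split: if_splits)

lemma resplit_vertices:
  assumes "btb_graph B W Wbd E" and "is_resplit B W Wbd E w0 b b' w1 w2 w3 w4"
  shows "{w0, w1, w2, w3, w4} \<subseteq> W" and "w1 \<noteq> w2" and "w3 \<noteq> w4"
proof -
  have nbrs: "nbrs E b = {w0, w1, w2}" "nbrs E b' = {w0, w3, w4}" and B: "b \<in> B" "b' \<in> B"
    using assms(2) unfolding is_resplit_def by auto
  have E: "E \<subseteq> B \<times> W" "\<forall>b\<in>B. card (nbrs E b) = 3"
    using assms(1) unfolding btb_graph_def by auto
  have "nbrs E b \<subseteq> W" "nbrs E b' \<subseteq> W"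
    using E(1) unfolding nbrs_def by blast+
  then show "{w0, w1, w2, w3, w4} \<subseteq> W"
    unfolding nbrs by blast
  show "w1 \<noteq> w2" "w3 \<noteq> w4"
    using E(2) B nbrs card_three_neq by metis+
qed

theorem lemma5p3:
  fixes B :: "'b set" and W Wbd :: "'w set" and E :: "('b \<times> 'w) set"
    and T :: "'w \<Rightarrow> (complex ^ ('n::finite)) set"
    and U V :: "(complex ^ ('n::finite)) set"
    and w0 w1 w2 w3 w4 :: 'w and b b' :: 'b
  assumes "CARD('n) \<ge> 2"
    and "btb_graph B W Wbd E"
    and "tcd_map B W E T"
    and "is_resplit B W Wbd E w0 b b' w1 w2 w3 w4"
    and "cp_point U" and "complementary_hyperplane U V"
    and "tcd_map_in V B W E (\<lambda>w. cproj U V (T w))"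
    and "resplit_defined (\<lambda>w. cproj U V (T w)) w1 w2 w3 w4"
    and "resplit_defined T w1 w2 w3 w4"
    and "resplit_point T w0 w1 w2 w3 w4 \<noteq> U"
  shows "resplit_map (\<lambda>w. cproj U V (T w)) w0 w1 w2 w3 w4
         = (\<lambda>w. cproj U V (resplit_map T w0 w1 w2 w3 w4 w))"
proof -
  obtain u where u: "u \<noteq> 0" and U: "U = vec.span {u}"
    using assms(5) unfolding cp_point_def by blast
  note hyperplane = assms(6)[unfolded U]
  define T' where "T' = (\<lambda>w. cproj U V (T w))"
  have R: "b \<in> B" "b' \<in> B" "nbrs E b = {w0, w1, w2}" "nbrs E b' = {w0, w3, w4}"
    using assms(4) unfolding is_resplit_def by auto
  have W: "w0 \<in> W" "w1 \<in> W" "w2 \<in> W" "w3 \<in> W" "w4 \<in> W" and "w1 \<noteq> w2" "w3 \<noteq> w4"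
    using resplit_vertices[OF assms(2,4)] by simp_all
  obtain v where v: "\<And>w. w \<in> W \<Longrightarrow> is_lift (v w) (T w)"
    using tcd_map_in_lifts[OF assms(3)] by blast
  have pv: "is_lift (proj_along u V (v w)) (T' w)" if "w \<in> W" for w
  proof -
    have "cp_point (T' w)"
      using assms(7) that unfolding tcd_map_in_def cp_point_in_def T'_def by blast
    then show ?thesis
      using is_lift_cproj[OF u hyperplane v[OF that]] unfolding T'_def U by simp
  qed
  obtain a1 a2 where "v w0 = a1 *s v w1 + a2 *s v w2"
    using tcd_map_in_lincomb[OF assms(3) R(1,3) \<open>w1 \<noteq> w2\<close> v v v] W by blast
  moreover obtain a3 a4 where "v w0 = a3 *s v w3 + a4 *s v w4"
    using tcd_map_in_lincomb[OF assms(3) R(2,4) \<open>w3 \<noteq> w4\<close> v v v] W by blast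
  moreover have "T w1 \<noteq> T w2" "T w3 \<noteq> T w4" "T' w1 \<noteq> T' w2" "T' w3 \<noteq> T' w4"
    using tcd_map_in_distinct[OF assms(3)] tcd_map_in_distinct[OF assms(7)[folded T'_def]]
      R \<open>w1 \<noteq> w2\<close> \<open>w3 \<noteq> w4\<close> by simp_all
  ultimately obtain x where "resplit_point T w0 w1 w2 w3 w4 = vec.span {x}"
    and "resplit_point T' w0 w1 w2 w3 w4 = vec.span {proj_along u V x}"
    using resplit_point_linear_image[OF linear_proj_along[OF u hyperplane], of w0 w1 w2 w3 w4 v T T']
      v pv W by blast
  then have "resplit_point T' w0 w1 w2 w3 w4 = cproj U V (resplit_point T w0 w1 w2 w3 w4)"
    using cproj_span_singleton[OF u hyperplane] U by simp
  then show ?thesis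
    by (simp add: resplit_map_def T'_def fun_eq_iff)
qed

end
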